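(* Let $m,r$ be positive integers, let $W\in\mathbb{R}^{m\times m}$ be a fixed real symmetric matrix, and define $f:\mathbb{R}^{m\times r}\to\mathbb{R}$ by $f(U)=F(W,U):=\frac{1}{2}\|W-UU^{T}\|_{F}^{2}$. Let $\psi:\mathbb{R}^{m\times r}\rightarrow\mathbb{R}$ be the kernel \[ \psi(U):= \frac{3}{2}\|U\|_{F}^{4}+\|W\|_{F}\|U\|_{F}^{2}. \] Then for every $L\ge 1$, the pair $(f,\psi)$ is $L$-smooth adaptable on $\mathbb{R}^{m\times r}$, i.e. \[ |f(X)-f(Y)-\langle\nabla f(Y),X-Y\rangle|\le L\, D_{\psi}(X,Y)\quad \text{for all } X,Y\in\mathbb{R}^{m\times r}. \]
   Context: $\|\cdot\|_F$ is the Frobenius norm and $\langle Y_1,Y_2\rangle:=\mathrm{tr}(Y_1^{T}Y_2)$. For a differentiable function $\psi$, the Bregman distance is $D_{\psi}(X,Y):=\psi(X)-\psi(Y)-\langle\nabla\psi(Y),X-Y\rangle$. A pair $(f,\psi)$ is called $L$-smooth adaptable ($L$-smad) on a set $C$ if there is $L>0$ with $|f(x)-f(y)-\langle\nabla f(y),x-y\rangle|\le L D_{\psi}(x,y)$ for all $x,y\in C$. In the paper, $W$ is the current iterate $W^{k+1}$ of an alternating algorithm, which is symmetric. *)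

theory Defs
  imports "HOL-Analysis.Analysis"
begin

text \<open>Matrices in R^(m x r) are modelled as real^'r^'m. The library norm on this
type is the Frobenius norm and the library inner product is tr(Y1^T Y2).\<close>

definition grad :: "('a::real_inner \<Rightarrow> real) \<Rightarrow> 'a \<Rightarrow> 'a" where
  "grad f x = (SOME g. (f has_derivative (\<lambda>h. inner g h)) (at x))"

definition bregman :: "('a::real_inner \<Rightarrow> real) \<Rightarrow> 'a \<Rightarrow> 'a \<Rightarrow> real" where
  "bregman psi x y = psi x - psi y - inner (grad psi y) (x - y)"

definition L_smad :: "('a::real_inner \<Rightarrow> real) \<Rightarrow> ('a \<Rightarrow> real) \<Rightarrow> real \<Rightarrow> 'a set \<Rightarrow> bool" where
  "L_smad f psi L C \<longleftrightarrow> L > 0 \<and>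
     (\<forall>x\<in>C. \<forall>y\<in>C. \<bar>f x - f y - inner (grad f y) (x - y)\<bar> \<le> L * bregman psi x y)"

end

theory Submission
  imports Defs
begin

text \<open>Write R_f(Y,H) and R_psi(Y,H) for the first-order Taylor remainders of f and psi at Y in
  direction H, and put A = Y Y^T, S = Y H^T + H Y^T, Q = H H^T. Expanding the squares gives
  R_f = 1/2 ||S + Q||^2 + <A, Q> - <W, Q> and, with b = <Y, H>,
  R_psi = 6 (b + ||H||^2/2)^2 + 3 ||Y||^2 ||H||^2 + ||W|| ||H||^2.
  Since <A, Q> = ||H^T Y||^2 lies in [0, ||Y||^2 ||H||^2] and |<W, Q>| <= ||W|| ||H||^2, the only
  real work is bounding ||S + Q||: writing S + Q = Z H^T + H Z^T with Z = Y + H/2 and using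
  submultiplicativity of the Frobenius norm gives ||S + Q||^2 <= 4 ||Z||^2 ||H||^2, after which
  |R_f| <= R_psi is an inequality between quadratic forms in b and ||H||^2. Both remainders are
  O(||H||^2), which identifies the gradients, and L >= 1 finishes the proof since R_psi >= 0.\<close>

lemma transpose_add: "transpose (A + B) = transpose A + transpose (B::'a::semiring_1^'n^'m)"
  by (simp add: transpose_def vec_eq_iff)

lemma matrix_add_rdistrib: "(A + B) ** C = A ** C + B ** (C::'a::semiring_1^'p^'n)"
  by (simp add: matrix_matrix_mult_def vec_eq_iff sum.distrib distrib_right)

lemma matrix_scaleR_mult_left: "(k *\<^sub>R A) ** B = k *\<^sub>R (A ** (B::real^'p^'n))"
  by (simp add: matrix_matrix_mult_def vec_eq_iff sum_distrib_left mult.assoc)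

lemma matrix_scaleR_mult_right: "A ** (k *\<^sub>R B) = k *\<^sub>R (A ** (B::real^'p^'n))"
  by (simp add: matrix_matrix_mult_def vec_eq_iff sum_distrib_left mult_ac)

lemma inner_transpose: "inner (transpose A) (transpose B) = inner A (B::real^'n^'m)"
proof -
  have "inner (transpose A) (transpose B) = (\<Sum>j\<in>UNIV. \<Sum>i\<in>UNIV. A$i$j * B$i$j)"
    by (simp add: inner_vec_def transpose_def)
  also have "\<dots> = inner A B"
    by (subst sum.swap) (simp add: inner_vec_def)
  finally show ?thesis .
qed

lemma norm_transpose: "norm (transpose A) = norm (A::real^'n^'m)"
  by (simp add: norm_eq_sqrt_inner inner_transpose)

lemma inner_matrix_mult_left:
  "inner (M ** N) P = inner M (P ** transpose (N::real^'p^'n))"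
proof -
  have "inner (M ** N) P = (\<Sum>i\<in>UNIV. \<Sum>j\<in>UNIV. \<Sum>k\<in>UNIV. M$i$k * N$k$j * P$i$j)"
    by (simp add: inner_vec_def matrix_matrix_mult_def sum_distrib_right)
  also have "\<dots> = (\<Sum>i\<in>UNIV. \<Sum>k\<in>UNIV. \<Sum>j\<in>UNIV. M$i$k * N$k$j * P$i$j)"
    by (rule sum.cong[OF refl], rule sum.swap)
  also have "\<dots> = inner M (P ** transpose N)"
    by (simp add: inner_vec_def matrix_matrix_mult_def transpose_def sum_distrib_left mult_ac)
  finally show ?thesis .
qed

lemma inner_matrix_mult_right:
  "inner (M ** N) P = inner N (transpose M ** (P::real^'p^'m))"
proof -
  have "inner (M ** N) P = inner (transpose N ** transpose M) (transpose P)"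
    by (metis inner_transpose matrix_transpose_mul)
  also have "\<dots> = inner N (transpose M ** P)"
    by (metis inner_matrix_mult_left inner_transpose matrix_transpose_mul transpose_transpose)
  finally show ?thesis .
qed

lemma norm_matrix_mult_le: "norm (M ** N) \<le> norm M * norm (N::real^'p^'n)"
proof -
  have entry: "(M ** N) $ i $ j = inner (M $ i) (column j N)" for i j
    by (simp add: matrix_matrix_mult_def column_def inner_vec_def)
  have "(norm (M ** N))^2 = (\<Sum>i\<in>UNIV. \<Sum>j\<in>UNIV. (inner (M $ i) (column j N))^2)"
    unfolding power2_norm_eq_inner by (simp add: inner_vec_def entry power2_eq_square)
  also have "\<dots> \<le> (\<Sum>i\<in>UNIV. \<Sum>j\<in>UNIV. (norm (M $ i))^2 * (norm (column j N))^2)"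
    by (intro sum_mono) (metis Cauchy_Schwarz_ineq power2_norm_eq_inner)
  also have "\<dots> = (norm M)^2 * (norm (transpose N))^2"
  proof -
    have "transpose N $ j = column j N" for j
      by (simp add: transpose_def column_def)
    then show ?thesis
      unfolding sum_product[symmetric] power2_norm_eq_inner
        inner_vec_def[of M] inner_vec_def[of "transpose N"]
      by simp
  qed
  finally have "(norm (M ** N))^2 \<le> (norm M * norm N)^2"
    by (simp only: norm_transpose power_mult_distrib)
  then show ?thesis
    by (rule power2_le_imp_le) simp
qed

lemma norm_symmetrized_product_le:
  "norm (A ** transpose B + B ** transpose A) \<le> 2 * norm A * norm (B::real^'n^'m)"
proof -
  have "norm (A ** transpose B + B ** transpose A) \<le> norm (A ** transpose B) + norm (B ** transpose A)"
    by (rule norm_triangle_ineq)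
  also have "\<dots> \<le> norm A * norm B + norm B * norm A"
    using norm_matrix_mult_le[of A "transpose B"] norm_matrix_mult_le[of B "transpose A"]
    by (simp only: norm_transpose add_mono)
  finally show ?thesis
    by (simp add: mult_ac)
qed

lemma inner_gram_matrices:
  "inner (A ** transpose A) (B ** transpose B) = (norm (transpose B ** (A::real^'n^'m)))^2"
proof -
  have "inner (A ** transpose A) (B ** transpose B) = inner A (B ** (transpose B ** A))"
    by (simp add: inner_matrix_mult_left matrix_mul_assoc)
  also have "\<dots> = inner (transpose B ** A) (transpose B ** A)"
    by (metis inner_commute inner_matrix_mult_right)
  finally show ?thesis
    by (simp add: power2_norm_eq_inner)
qed

lemma inner_gram_matrices_le:
  "inner (A ** transpose A) (B ** transpose B) \<le> (norm A * norm (B::real^'n^'m))^2"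
  unfolding inner_gram_matrices
  using norm_matrix_mult_le[of "transpose B" A]
  by (simp add: norm_transpose mult.commute power_mono)

lemma has_derivative_at_of_quadratic_remainder:
  fixes \<phi> :: "'a::real_normed_vector \<Rightarrow> real"
  assumes "bounded_linear D"
    and remainder: "\<And>h. norm h \<le> 1 \<Longrightarrow> \<bar>\<phi> (x + h) - \<phi> x - D h\<bar> \<le> K * (norm h)^2"
  shows "(\<phi> has_derivative D) (at x)"
  unfolding has_derivative_at
proof
  show "bounded_linear D" by fact
  have "\<forall>\<^sub>F h in at 0. norm (norm (\<phi> (x + h) - \<phi> x - D h) / norm h) \<le> K * norm h"
    unfolding eventually_at
  proof (intro exI[of _ 1] conjI ballI impI)
    fix h :: 'a
    assume "h \<noteq> 0 \<and> dist h 0 < 1"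
    then have "norm h > 0" "norm h \<le> 1"
      by auto
    with remainder[of h] show "norm (norm (\<phi> (x + h) - \<phi> x - D h) / norm h) \<le> K * norm h"
      by (simp add: divide_le_eq power2_eq_square mult.assoc)
  qed simp
  moreover have "((\<lambda>h. K * norm h) \<longlongrightarrow> 0) (at 0)"
    by (intro tendsto_eq_intros) auto
  ultimately show "(\<lambda>h. norm (\<phi> (x + h) - \<phi> x - D h) / norm h) \<midarrow>0\<rightarrow> 0"
    by (rule Lim_null_comparison)
qed

lemma grad_eqI:
  fixes f :: "'a::real_inner \<Rightarrow> real"
  assumes deriv: "(f has_derivative (\<lambda>h. inner g h)) (at x)"
  shows "grad f x = g"
proof -
  have "(f has_derivative (\<lambda>h. inner (grad f x) h)) (at x)"
    unfolding grad_def using deriv by (rule someI)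
  then have "(\<lambda>h. inner (grad f x) h) = (\<lambda>h. inner g h)"
    using deriv by (rule has_derivative_unique)
  then have "inner (grad f x - g) (grad f x - g) = 0"
    by (simp add: inner_diff_left fun_eq_iff)
  then show ?thesis
    by simp
qed

definition factor_loss :: "real^'m^'m \<Rightarrow> real^'r^'m \<Rightarrow> real" where
  "factor_loss W U = 1/2 * (norm (W - U ** transpose U))^2"

definition factor_kernel :: "real^'m^'m \<Rightarrow> real^'r^'m \<Rightarrow> real" where
  "factor_kernel W U = 3/2 * (norm U)^4 + norm W * (norm U)^2"

definition factor_loss_grad :: "real^'m^'m \<Rightarrow> real^'r^'m \<Rightarrow> real^'r^'m" where
  "factor_loss_grad W U = - ((W - U ** transpose U + transpose (W - U ** transpose U)) ** U)"

definition factor_kernel_grad :: "real^'m^'m \<Rightarrow> real^'r^'m \<Rightarrow> real^'r^'m" where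
  "factor_kernel_grad W U = (6 * (norm U)^2 + 2 * norm W) *\<^sub>R U"

lemma factor_kernel_remainder:
  "factor_kernel W (Y + H) - factor_kernel W Y - inner (factor_kernel_grad W Y) H
     = 6 * (inner Y H + (norm H)^2 / 2)^2 + 3 * (norm Y)^2 * (norm H)^2 + norm W * (norm H)^2"
proof -
  have "(norm (Y + H))^2 = (norm Y)^2 + 2 * inner Y H + (norm H)^2"
    by (simp add: power2_norm_eq_inner inner_add_left inner_add_right inner_commute[of H Y])
  moreover have "x^4 = (x^2)^2" for x :: real
    by simp
  ultimately show ?thesis
    unfolding factor_kernel_def factor_kernel_grad_def
    by (simp add: power2_eq_square algebra_simps)
qed

lemma factor_loss_remainder:
  "factor_loss W (Y + H) - factor_loss W Y - inner (factor_loss_grad W Y) H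
     = 1/2 * (norm (Y ** transpose H + H ** transpose Y + H ** transpose H))^2
       + inner (Y ** transpose Y - W) (H ** transpose H)"
proof -
  define E where "E = W - Y ** transpose Y"
  define S where "S = Y ** transpose H + H ** transpose Y"
  define Q where "Q = H ** transpose H"
  have "(Y + H) ** transpose (Y + H) = Y ** transpose Y + S + Q"
    by (simp add: S_def Q_def transpose_add matrix_add_ldistrib matrix_add_rdistrib algebra_simps)
  then have loss_YH: "factor_loss W (Y + H) = 1/2 * inner (E - (S + Q)) (E - (S + Q))"
    by (simp add: factor_loss_def E_def power2_norm_eq_inner algebra_simps)
  have loss_Y: "factor_loss W Y = 1/2 * inner E E"
    by (simp add: factor_loss_def E_def power2_norm_eq_inner)
  have "inner (transpose E ** Y) H = inner E (Y ** transpose H)"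
    by (metis inner_matrix_mult_left inner_transpose matrix_transpose_mul transpose_transpose)
  then have grad: "inner (factor_loss_grad W Y) H = - inner E S"
    by (simp add: factor_loss_grad_def E_def[symmetric] S_def matrix_add_rdistrib
        inner_matrix_mult_left[of E] algebra_simps)
  have SQ: "Y ** transpose H + H ** transpose Y + H ** transpose H = S + Q"
    and minus_E: "Y ** transpose Y - W = - E"
    by (simp_all add: S_def Q_def E_def)
  show ?thesis
    unfolding SQ minus_E unfolding Q_def[symmetric] loss_YH loss_Y grad
    by (simp add: power2_norm_eq_inner inner_commute algebra_simps)
qed

lemma factor_loss_remainder_bound:
  "\<bar>factor_loss W (Y + H) - factor_loss W Y - inner (factor_loss_grad W Y) H\<bar>
     \<le> factor_kernel W (Y + H) - factor_kernel W Y - inner (factor_kernel_grad W Y) H"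
proof -
  define y n b w where "y = norm Y" and "n = norm H" and "b = inner Y H" and "w = norm W"
  define N where "N = norm (Y ** transpose H + H ** transpose Y + H ** transpose H)"
  define g where "g = inner (Y ** transpose Y) (H ** transpose H)"
  define q where "q = inner W (H ** transpose H)"
  have g_bounds: "0 \<le> g" "g \<le> y^2 * n^2"
    using inner_gram_matrices[of Y H] inner_gram_matrices_le[of Y H]
    by (simp_all add: g_def y_def n_def power_mult_distrib)
  have q_bound: "\<bar>q\<bar> \<le> w * n^2"
  proof -
    have "\<bar>q\<bar> \<le> norm W * norm (H ** transpose H)"
      unfolding q_def by (rule Cauchy_Schwarz_ineq2)
    also have "\<dots> \<le> w * n^2"
      using norm_matrix_mult_le[of H "transpose H"]
      by (simp add: w_def n_def norm_transpose power2_eq_square mult_left_mono)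
    finally show ?thesis .
  qed
  \<comment> \<open>The cruder bound ||S + Q|| <= 2 ||Y|| ||H|| + ||H||^2 fails when <Y, H> < 0;
    writing S + Q as a symmetrized product with Y + H/2 keeps track of the sign of <Y, H>.\<close>
  have N_bound: "N^2 / 2 \<le> 2 * ((y^2 + b + n^2 / 4) * n^2)"
  proof -
    define Z where "Z = Y + (1/2) *\<^sub>R H"
    have "Y ** transpose H + H ** transpose Y + H ** transpose H = Z ** transpose H + H ** transpose Z"
      by (simp add: Z_def transpose_add transpose_scalar matrix_add_ldistrib matrix_add_rdistrib
          matrix_scaleR_mult_left matrix_scaleR_mult_right algebra_simps scaleR_2[symmetric])
    then have "N \<le> 2 * norm Z * n"
      unfolding N_def n_def by (metis norm_symmetrized_product_le)
    then have "N^2 \<le> (2 * norm Z * n)^2"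
      by (rule power_mono) (simp add: N_def)
    also have "\<dots> = 4 * ((norm Z)^2 * n^2)"
      by (simp add: power_mult_distrib)
    also have "(norm Z)^2 = y^2 + b + n^2 / 4"
      by (simp add: Z_def y_def b_def n_def power2_norm_eq_inner inner_commute[of H Y] algebra_simps)
    finally show ?thesis
      by simp
  qed
  have loss_rem: "factor_loss W (Y + H) - factor_loss W Y - inner (factor_loss_grad W Y) H
      = N^2 / 2 + g - q"
    by (simp add: factor_loss_remainder N_def g_def q_def inner_diff_left)
  have kernel_rem: "factor_kernel W (Y + H) - factor_kernel W Y - inner (factor_kernel_grad W Y) H
      = 6 * (b + n^2 / 2)^2 + 3 * (y^2 * n^2) + w * n^2"
    by (simp add: factor_kernel_remainder y_def n_def b_def w_def)
  have "2 * ((y^2 + b + n^2 / 4) * n^2) + y^2 * n^2 \<le> 6 * (b + n^2 / 2)^2 + 3 * (y^2 * n^2)"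
  proof -
    have "0 \<le> 6 * (b + n^2 / 3)^2 + (n^2)^2 / 3"
      by simp
    then show ?thesis
      by (simp add: power2_eq_square algebra_simps)
  qed
  moreover have "0 \<le> 6 * (b + n^2 / 2)^2 + 3 * (y^2 * n^2)"
    by simp
  ultimately show ?thesis
    unfolding loss_rem kernel_rem using g_bounds q_bound N_bound zero_le_power2[of N]
    by linarith
qed

lemma factor_kernel_remainder_le:
  assumes "norm H \<le> 1"
  shows "factor_kernel W (Y + H) - factor_kernel W Y - inner (factor_kernel_grad W Y) H
     \<le> (6 * (norm Y + 1)^2 + 3 * (norm Y)^2 + norm W) * (norm H)^2"
proof -
  have "\<bar>inner Y H\<bar> \<le> norm Y * norm H"
    by (rule Cauchy_Schwarz_ineq2)
  moreover have "(norm H)^2 \<le> norm H"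
    using mult_left_le[OF assms norm_ge_zero] by (simp add: power2_eq_square)
  ultimately have "\<bar>inner Y H + (norm H)^2 / 2\<bar> \<le> (norm Y + 1) * norm H"
    using zero_le_power2[of "norm H"] unfolding distrib_right abs_le_iff by linarith
  then have "(inner Y H + (norm H)^2 / 2)^2 \<le> (norm Y + 1)^2 * (norm H)^2"
    by (metis abs_ge_zero power2_abs power_mono power_mult_distrib)
  then show ?thesis
    unfolding factor_kernel_remainder by (simp add: algebra_simps)
qed

lemma factor_kernel_remainder_nonneg:
  "0 \<le> factor_kernel W (Y + H) - factor_kernel W Y - inner (factor_kernel_grad W Y) H"
  using factor_loss_remainder_bound[of W Y H] by linarith

lemma has_derivative_factor_kernel:
  fixes Y :: "real^'r^'m"
  shows "(factor_kernel W has_derivative inner (factor_kernel_grad W Y)) (at Y)"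
proof (rule has_derivative_at_of_quadratic_remainder)
  show "bounded_linear (inner (factor_kernel_grad W Y))"
    by (rule bounded_linear_inner_right)
  fix H :: "real^'r^'m"
  assume "norm H \<le> 1"
  then show "\<bar>factor_kernel W (Y + H) - factor_kernel W Y - inner (factor_kernel_grad W Y) H\<bar>
      \<le> (6 * (norm Y + 1)^2 + 3 * (norm Y)^2 + norm W) * (norm H)^2"
    using factor_kernel_remainder_le[of H W Y] factor_kernel_remainder_nonneg[of W Y H] by simp
qed

lemma has_derivative_factor_loss:
  fixes Y :: "real^'r^'m"
  shows "(factor_loss W has_derivative inner (factor_loss_grad W Y)) (at Y)"
proof (rule has_derivative_at_of_quadratic_remainder)
  show "bounded_linear (inner (factor_loss_grad W Y))"
    by (rule bounded_linear_inner_right)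
  fix H :: "real^'r^'m"
  assume "norm H \<le> 1"
  then show "\<bar>factor_loss W (Y + H) - factor_loss W Y - inner (factor_loss_grad W Y) H\<bar>
      \<le> (6 * (norm Y + 1)^2 + 3 * (norm Y)^2 + norm W) * (norm H)^2"
    using factor_loss_remainder_bound[of W Y H] factor_kernel_remainder_le[of H W Y] by linarith
qed

lemma L_smad_factor_loss_kernel:
  fixes W :: "real^'m^'m"
  assumes "L \<ge> 1"
  shows "L_smad (factor_loss W :: real^'r^'m \<Rightarrow> real) (factor_kernel W) L UNIV"
  unfolding L_smad_def bregman_def
proof (intro conjI ballI)
  show "L > 0"
    using assms by simp
  fix X Y :: "real^'r^'m"
  have grads: "grad (factor_loss W) Y = factor_loss_grad W Y"
    "grad (factor_kernel W) Y = factor_kernel_grad W Y"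
    by (simp_all add: grad_eqI has_derivative_factor_loss has_derivative_factor_kernel)
  have bound: "\<bar>factor_loss W X - factor_loss W Y - inner (factor_loss_grad W Y) (X - Y)\<bar>
      \<le> factor_kernel W X - factor_kernel W Y - inner (factor_kernel_grad W Y) (X - Y)"
    and nonneg: "0 \<le> factor_kernel W X - factor_kernel W Y - inner (factor_kernel_grad W Y) (X - Y)"
    using factor_loss_remainder_bound[of W Y "X - Y"] factor_kernel_remainder_nonneg[of W Y "X - Y"]
    by simp_all
  have "factor_kernel W X - factor_kernel W Y - inner (factor_kernel_grad W Y) (X - Y)
      \<le> L * (factor_kernel W X - factor_kernel W Y - inner (factor_kernel_grad W Y) (X - Y))"
    using mult_right_mono[OF assms nonneg] by simp
  with bound show "\<bar>factor_loss W X - factor_loss W Y - inner (grad (factor_loss W) Y) (X - Y)\<bar>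
      \<le> L * (factor_kernel W X - factor_kernel W Y - inner (grad (factor_kernel W) Y) (X - Y))"
    unfolding grads by (rule order_trans)
qed

theorem proposition1:
  fixes W :: "real^'m^'m" and L :: real
  assumes "transpose W = W"
    and "L \<ge> 1"
  shows "L_smad (\<lambda>U::real^'r^'m. (1/2) * (norm (W - U ** transpose U))^2)
                (\<lambda>U::real^'r^'m. (3/2) * (norm U)^4 + norm W * (norm U)^2)
                L UNIV"
  using L_smad_factor_loss_kernel[OF assms(2), of W]
  by (simp add: factor_loss_def[abs_def] factor_kernel_def[abs_def])

end
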